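(* Let $\Gamma=(V,E)$ be a simple graph of order $n$, size $m$ and maximum degree $\Delta$. Then the global offensive alliance number of $\Gamma$ satisfies $$\gamma_{a_o}(\Gamma)\ge \left\lceil\frac{(2n+\Delta+1)-\sqrt{(2n+\Delta+1)^{2}-8(2m+n)}}{4}\right\rceil$$ and the global strong offensive alliance number of $\Gamma$ satisfies $$\gamma_{\hat{a}_o}(\Gamma)\ge \left\lceil\frac{(2n+\Delta+2)-\sqrt{(2n+\Delta+2)^{2}-16(m+n)}}{4}\right\rceil.$$
   Context: For $S\subseteq V$ and $v\in V$, $N_S(v)=\{u\in S: u\sim v\}$ and $N_{V\setminus S}(v)=\{u\in V\setminus S: u\sim v\}$. A nonempty set $S\subseteq V$ is a global offensive alliance if $|N_S(v)|\ge |N_{V\setminus S}(v)|+1$ for every $v\in V\setminus S$, and a global strong offensive alliance if $|N_S(v)|\ge |N_{V\setminus S}(v)|+2$ for every $v\in V\setminus S$. $\gamma_{a_o}(\Gamma)$ (resp. $\gamma_{\hat a_o}(\Gamma)$) is the minimum cardinality of a global offensive (resp. global strong offensive) alliance. *)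

theory Defs
  imports Complex_Main
begin

definition simple_graph :: "'a set \<Rightarrow> ('a \<Rightarrow> 'a \<Rightarrow> bool) \<Rightarrow> bool" where
  "simple_graph V E \<longleftrightarrow> finite V \<and> (\<forall>u v. E u v \<longrightarrow> u \<in> V \<and> v \<in> V)
     \<and> (\<forall>u v. E u v \<longrightarrow> E v u) \<and> (\<forall>v. \<not> E v v)"

definition nbhd_in :: "('a \<Rightarrow> 'a \<Rightarrow> bool) \<Rightarrow> 'a set \<Rightarrow> 'a \<Rightarrow> 'a set" where
  "nbhd_in E S v = {u \<in> S. E u v}"

definition degree :: "'a set \<Rightarrow> ('a \<Rightarrow> 'a \<Rightarrow> bool) \<Rightarrow> 'a \<Rightarrow> nat" where
  "degree V E v = card (nbhd_in E V v)"

definition max_degree :: "'a set \<Rightarrow> ('a \<Rightarrow> 'a \<Rightarrow> bool) \<Rightarrow> nat" where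
  "max_degree V E = Max (degree V E ` V)"

definition edges :: "'a set \<Rightarrow> ('a \<Rightarrow> 'a \<Rightarrow> bool) \<Rightarrow> 'a set set" where
  "edges V E = {{u, v} | u v. u \<in> V \<and> v \<in> V \<and> E u v}"

definition global_offensive_alliance :: "'a set \<Rightarrow> ('a \<Rightarrow> 'a \<Rightarrow> bool) \<Rightarrow> 'a set \<Rightarrow> bool" where
  "global_offensive_alliance V E S \<longleftrightarrow> S \<noteq> {} \<and> S \<subseteq> V \<and>
     (\<forall>v \<in> V - S. card (nbhd_in E S v) \<ge> card (nbhd_in E (V - S) v) + 1)"

definition global_strong_offensive_alliance :: "'a set \<Rightarrow> ('a \<Rightarrow> 'a \<Rightarrow> bool) \<Rightarrow> 'a set \<Rightarrow> bool" where
  "global_strong_offensive_alliance V E S \<longleftrightarrow> S \<noteq> {} \<and> S \<subseteq> V \<and>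
     (\<forall>v \<in> V - S. card (nbhd_in E S v) \<ge> card (nbhd_in E (V - S) v) + 2)"

definition goa_number :: "'a set \<Rightarrow> ('a \<Rightarrow> 'a \<Rightarrow> bool) \<Rightarrow> nat" where
  "goa_number V E = Min (card ` {S. global_offensive_alliance V E S})"

definition gsoa_number :: "'a set \<Rightarrow> ('a \<Rightarrow> 'a \<Rightarrow> bool) \<Rightarrow> nat" where
  "gsoa_number V E = Min (card ` {S. global_strong_offensive_alliance V E S})"

end

theory Submission
  imports Defs
begin

text \<open>If every vertex outside S has at least k more neighbours in S than outside, then summing
  degrees gives 2m \<le> s\<Delta> + (n - s)(2s - k) for s = |S|, by the handshake lemma. Hence
  2s^2 - (2n + \<Delta> + k)s + 2m + kn \<le> 0, so s is at least the smaller root of this quadratic.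
  Offensive alliances are the case k = 1, strong offensive alliances the case k = 2.\<close>

definition global_k_offensive :: "'a set \<Rightarrow> ('a \<Rightarrow> 'a \<Rightarrow> bool) \<Rightarrow> nat \<Rightarrow> 'a set \<Rightarrow> bool" where
  "global_k_offensive V E k S \<longleftrightarrow> S \<subseteq> V \<and>
     (\<forall>v \<in> V - S. card (nbhd_in E S v) \<ge> card (nbhd_in E (V - S) v) + k)"

lemma global_offensive_alliance_imp_k_offensive:
  "global_offensive_alliance V E S \<Longrightarrow> global_k_offensive V E 1 S"
  by (simp add: global_offensive_alliance_def global_k_offensive_def)

lemma global_strong_offensive_alliance_imp_k_offensive:
  "global_strong_offensive_alliance V E S \<Longrightarrow> global_k_offensive V E 2 S"
  by (simp add: global_strong_offensive_alliance_def global_k_offensive_def)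

lemma simple_graph_finite: "simple_graph V E \<Longrightarrow> finite V"
  by (simp add: simple_graph_def)

lemma finite_edges:
  assumes "finite V"
  shows "finite (edges V E)"
proof -
  have "edges V E \<subseteq> (\<lambda>(u, v). {u, v}) ` (V \<times> V)"
    unfolding edges_def by auto
  then show ?thesis
    using assms by (meson finite_SigmaI finite_imageI finite_subset)
qed

lemma sum_degree_eq_twice_card_edges:
  assumes g: "simple_graph V E"
  shows "(\<Sum>v\<in>V. degree V E v) = 2 * card (edges V E)"
proof -
  have fin: "finite V"
    using g by (rule simple_graph_finite)
  define darts where "darts = Sigma V (nbhd_in E V)"
  have fin_darts: "finite darts"
    unfolding darts_def nbhd_in_def using fin by auto
  have darts_to_edges: "(\<lambda>(u, v). {u, v}) ` darts \<subseteq> edges V E"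
    using g unfolding darts_def nbhd_in_def edges_def simple_graph_def by auto
  have fibre: "card {p \<in> darts. (\<lambda>(u, v). {u, v}) p = e} = 2" if "e \<in> edges V E" for e
  proof -
    obtain u v where e: "e = {u, v}" "u \<in> V" "v \<in> V" "E u v"
      using \<open>e \<in> edges V E\<close> unfolding edges_def by auto
    have "u \<noteq> v"
      using e g by (auto simp: simple_graph_def)
    have "{p \<in> darts. (\<lambda>(u, v). {u, v}) p = e} = {(u, v), (v, u)}"
      using e g unfolding darts_def nbhd_in_def simple_graph_def by (auto simp: doubleton_eq_iff)
    then show ?thesis
      using \<open>u \<noteq> v\<close> by simp
  qed
  have "(\<Sum>v\<in>V. degree V E v) = card darts"
    unfolding darts_def degree_def using fin by (simp add: nbhd_in_def)
  also have "\<dots> = (\<Sum>e\<in>edges V E. card {p \<in> darts. (\<lambda>(u, v). {u, v}) p = e})"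
    unfolding card_eq_sum
    by (rule sum.group[symmetric, OF fin_darts finite_edges[OF fin] darts_to_edges])
  also have "\<dots> = 2 * card (edges V E)"
    using fibre by simp
  finally show ?thesis .
qed

lemma degree_le_max_degree:
  "simple_graph V E \<Longrightarrow> v \<in> V \<Longrightarrow> degree V E v \<le> max_degree V E"
  unfolding max_degree_def simple_graph_def by (auto intro: Max_ge)

lemma degree_split:
  assumes "finite V" and "S \<subseteq> V"
  shows "degree V E v = card (nbhd_in E S v) + card (nbhd_in E (V - S) v)"
proof -
  have "nbhd_in E V v = nbhd_in E S v \<union> nbhd_in E (V - S) v"
    using assms(2) by (auto simp: nbhd_in_def)
  moreover have "finite (nbhd_in E V v)"
    using assms(1) by (simp add: nbhd_in_def)
  ultimately show ?thesis
    unfolding degree_def by (auto simp: nbhd_in_def intro: card_Un_disjoint)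
qed

lemma global_k_offensive_edge_bound:
  assumes g: "simple_graph V E" and off: "global_k_offensive V E k S"
  shows "2 * card (edges V E) + k * card (V - S) \<le> card S * max_degree V E + 2 * card S * card (V - S)"
proof -
  have fin: "finite V"
    using g by (rule simple_graph_finite)
  have S: "S \<subseteq> V"
    using off by (simp add: global_k_offensive_def)
  have finS: "finite S"
    using fin S by (rule finite_subset[rotated])
  have inside: "(\<Sum>v\<in>S. degree V E v) \<le> card S * max_degree V E"
    using sum_bounded_above[of S "degree V E" "max_degree V E"] degree_le_max_degree[OF g] S by auto
  have outside: "(\<Sum>v\<in>V - S. degree V E v + k) \<le> (\<Sum>v\<in>V - S. 2 * card S)"
  proof (rule sum_mono)
    fix v assume v: "v \<in> V - S"
    have "card (nbhd_in E S v) \<le> card S"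
      using finS by (auto simp: nbhd_in_def intro: card_mono)
    then show "degree V E v + k \<le> 2 * card S"
      using degree_split[OF fin S, of E v] off v by (force simp: global_k_offensive_def)
  qed
  have "2 * card (edges V E) = (\<Sum>v\<in>S. degree V E v) + (\<Sum>v\<in>V - S. degree V E v)"
    using sum_degree_eq_twice_card_edges[OF g] fin S by (metis add.commute sum.subset_diff)
  then show ?thesis
    using inside outside by (simp add: sum.distrib mult.commute)
qed

lemma quadratic_nonpos_imp_ge_smaller_root:
  fixes s b c :: real
  assumes "2 * s\<^sup>2 - b * s + c \<le> 0"
  shows "(b - sqrt (b\<^sup>2 - 8 * c)) / 4 \<le> s"
proof -
  have "(4 * s - b)\<^sup>2 \<le> b\<^sup>2 - 8 * c"
    using assms by (simp add: power2_eq_square algebra_simps)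
  then have "\<bar>4 * s - b\<bar> \<le> sqrt (b\<^sup>2 - 8 * c)"
    using real_sqrt_le_mono by fastforce
  then show ?thesis
    by (simp add: abs_le_iff)
qed

lemma card_global_k_offensive_ge:
  assumes g: "simple_graph V E" and off: "global_k_offensive V E k S"
  defines "n \<equiv> real (card V)" and "m \<equiv> real (card (edges V E))"
      and "\<Delta> \<equiv> real (max_degree V E)"
  shows "((2*n + \<Delta> + k) - sqrt ((2*n + \<Delta> + k)\<^sup>2 - 8*(2*m + k*n))) / 4 \<le> real (card S)"
proof -
  have S: "S \<subseteq> V"
    using off by (simp add: global_k_offensive_def)
  have "card S \<le> card V" and "card (V - S) = card V - card S"
    using S simple_graph_finite[OF g] by (auto simp: card_mono card_Diff_subset finite_subset)
  moreover have "real (2 * card (edges V E) + k * card (V - S))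
      \<le> real (card S * max_degree V E + 2 * card S * card (V - S))"
    using global_k_offensive_edge_bound[OF g off] by (simp only: of_nat_le_iff)
  ultimately have "2*m + k * (n - card S) \<le> card S * \<Delta> + 2 * card S * (n - card S)"
    unfolding n_def m_def \<Delta>_def by simp
  then have "2 * (real (card S))\<^sup>2 - (2*n + \<Delta> + k) * card S + (2*m + k*n) \<le> 0"
    by (simp add: power2_eq_square algebra_simps)
  then show ?thesis
    by (rule quadratic_nonpos_imp_ge_smaller_root)
qed

lemma Min_card_attained:
  assumes "finite V" and "P V" and "\<And>S. P S \<Longrightarrow> S \<subseteq> V"
  obtains S where "P S" and "Min (card ` {S. P S}) = card S"
proof -
  have "finite {S. P S}"
    using assms(1,3) by (auto intro: finite_subset[of _ "Pow V"])
  then have "Min (card ` {S. P S}) \<in> card ` {S. P S}"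
    using assms(2) by (intro Min_in) auto
  then show ?thesis
    using that by auto
qed

theorem theorem7:
  fixes V :: "'a set" and E :: "'a \<Rightarrow> 'a \<Rightarrow> bool"
  assumes "simple_graph V E" and "V \<noteq> {}"
  defines "n \<equiv> real (card V)" and "m \<equiv> real (card (edges V E))"
      and "\<Delta> \<equiv> real (max_degree V E)"
  shows "real (goa_number V E) \<ge>
           of_int \<lceil>((2*n + \<Delta> + 1) - sqrt ((2*n + \<Delta> + 1)^2 - 8*(2*m + n))) / 4\<rceil>
       \<and> real (gsoa_number V E) \<ge>
           of_int \<lceil>((2*n + \<Delta> + 2) - sqrt ((2*n + \<Delta> + 2)^2 - 16*(m + n))) / 4\<rceil>"
proof -
  have fin: "finite V"
    using assms(1) by (rule simple_graph_finite)
  have "global_offensive_alliance V E V" and "global_strong_offensive_alliance V E V"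
    using assms(2)
    by (simp_all add: global_offensive_alliance_def global_strong_offensive_alliance_def)
  then obtain S T where S: "global_offensive_alliance V E S" and goa: "goa_number V E = card S"
    and T: "global_strong_offensive_alliance V E T" and gsoa: "gsoa_number V E = card T"
    unfolding goa_number_def gsoa_number_def
    by (metis Min_card_attained[OF fin] global_offensive_alliance_def
        global_strong_offensive_alliance_def)
  have "((2*n + \<Delta> + 1) - sqrt ((2*n + \<Delta> + 1)^2 - 8*(2*m + n))) / 4 \<le> real (card S)"
    using card_global_k_offensive_ge[OF assms(1) global_offensive_alliance_imp_k_offensive[OF S]]
    unfolding n_def m_def \<Delta>_def by simp
  moreover have "((2*n + \<Delta> + 2) - sqrt ((2*n + \<Delta> + 2)^2 - 16*(m + n))) / 4 \<le> real (card T)"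
    using card_global_k_offensive_ge[OF assms(1) global_strong_offensive_alliance_imp_k_offensive[OF T]]
    unfolding n_def m_def \<Delta>_def by (simp add: algebra_simps)
  ultimately show ?thesis
    unfolding goa gsoa by (metis ceiling_le of_int_le_iff of_int_of_nat_eq)
qed

end
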